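(* Let $a,b>0$ with $a\ne b$, and $\nu\in(0,\tfrac12)\cup(\tfrac12,1)$. Let $r=\min\{\nu,1-\nu\}$, $R=\max\{\nu,1-\nu\}$, and $$\alpha_\nu(a,b):=\left(\frac{a^{a/\nu}}{b^{b/(1-\nu)}}\cdot\frac{(a\nabla_\nu b)^{\frac{a\nabla_\nu b}{\nu(1-\nu)(2\nu-1)}}}{\big(\frac{a+b}{2}\big)^{\frac{2(a+b)}{2\nu-1}}}\right)^{\frac{1}{b-a}}.$$ Then $\alpha_\nu(a,b)\ge1$, $$\alpha_\nu(a,b)^{r}\,K(a,b)^{\widetilde r(\nu)}\le\frac{a\nabla_\nu b}{a\sharp_\nu b}\le \alpha_\nu(a,b)^{R}\,K(a,b)^{\widetilde R(\nu)},$$ and $$I_\nu(a,b)\le\frac1e\left(\frac{a^a}{b^b}\cdot\frac{\big(\frac{a+b}{2}\big)^{\frac{2(a+b)}{1-2\nu}}}{(a\nabla_\nu b)^{\frac{4(a\nabla_\nu b)}{1-2\nu}}}\right)^{\frac{1}{b-a}}.$$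
   Context: $a\nabla_\nu b:=(1-\nu)a+\nu b$, $a\sharp_\nu b:=a^{1-\nu}b^\nu$. Kantorovich constant: $K(a,b):=\frac{(a+b)^2}{4ab}$. Weighted identric mean: $$I_\nu(a,b):=\frac1e\,\big(a\nabla_\nu b\big)^{\frac{(1-2\nu)(a\nabla_\nu b)}{\nu(1-\nu)(b-a)}}\left(\frac{b^{\frac{\nu b}{1-\nu}}}{a^{\frac{(1-\nu)a}{\nu}}}\right)^{\frac{1}{b-a}}.$$ For $\lambda\in[0,1]$ let $r_1(\lambda)=\min\{\nu\lambda,1-\nu\lambda\}$, $r_2(\lambda)=\min\{(1-\nu)\lambda,1-(1-\nu)\lambda\}$, $R_1(\lambda)=\max\{\nu\lambda,1-\nu\lambda\}$, $R_2(\lambda)=\max\{(1-\nu)\lambda,1-(1-\nu)\lambda\}$, and $\widetilde r(\nu):=\int_0^1((1-\nu)r_1(\lambda)+\nu r_2(\lambda))d\lambda$, $\widetilde R(\nu):=\int_0^1((1-\nu)R_1(\lambda)+\nu R_2(\lambda))d\lambda$. *)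

theory Defs
  imports "HOL-Analysis.Analysis"
begin

definition wam :: "real \<Rightarrow> real \<Rightarrow> real \<Rightarrow> real" where
  "wam \<nu> a b = (1 - \<nu>) * a + \<nu> * b"

definition wgm :: "real \<Rightarrow> real \<Rightarrow> real \<Rightarrow> real" where
  "wgm \<nu> a b = a powr (1 - \<nu>) * b powr \<nu>"

definition kant :: "real \<Rightarrow> real \<Rightarrow> real" where
  "kant a b = (a + b)^2 / (4 * a * b)"

definition identric_w :: "real \<Rightarrow> real \<Rightarrow> real \<Rightarrow> real" where
  "identric_w \<nu> a b =
     (1 / exp 1) * (wam \<nu> a b) powr ((1 - 2*\<nu>) * wam \<nu> a b / (\<nu> * (1 - \<nu>) * (b - a)))
       * ((b powr (\<nu> * b / (1 - \<nu>))) / (a powr ((1 - \<nu>) * a / \<nu>))) powr (1 / (b - a))"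

definition r1 :: "real \<Rightarrow> real \<Rightarrow> real" where
  "r1 \<nu> l = min (\<nu> * l) (1 - \<nu> * l)"
definition r2 :: "real \<Rightarrow> real \<Rightarrow> real" where
  "r2 \<nu> l = min ((1 - \<nu>) * l) (1 - (1 - \<nu>) * l)"
definition R1 :: "real \<Rightarrow> real \<Rightarrow> real" where
  "R1 \<nu> l = max (\<nu> * l) (1 - \<nu> * l)"
definition R2 :: "real \<Rightarrow> real \<Rightarrow> real" where
  "R2 \<nu> l = max ((1 - \<nu>) * l) (1 - (1 - \<nu>) * l)"

definition r_tilde :: "real \<Rightarrow> real" where
  "r_tilde \<nu> = integral {0..1} (\<lambda>l. (1 - \<nu>) * r1 \<nu> l + \<nu> * r2 \<nu> l)"
definition R_tilde :: "real \<Rightarrow> real" where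
  "R_tilde \<nu> = integral {0..1} (\<lambda>l. (1 - \<nu>) * R1 \<nu> l + \<nu> * R2 \<nu> l)"

definition alpha_nu :: "real \<Rightarrow> real \<Rightarrow> real \<Rightarrow> real" where
  "alpha_nu \<nu> a b =
     ((a powr (a / \<nu>) / b powr (b / (1 - \<nu>)))
      * ((wam \<nu> a b) powr (wam \<nu> a b / (\<nu> * (1 - \<nu>) * (2*\<nu> - 1)))
         / ((a + b) / 2) powr (2 * (a + b) / (2*\<nu> - 1)))) powr (1 / (b - a))"

end

theory Submission
  imports Defs
begin

text \<open>
  Write \<open>L\<close>, \<open>k\<close> and \<open>\<lambda>\<close> for the logarithms of \<open>wam/wgm\<close>, of \<open>kant\<close> and of \<open>alpha_nu\<close>.
  Each of the inequalities has the form \<open>p \<lambda> + q k \<le> c L\<close>. As functions of \<open>b = u\<close>,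
  \<open>\<phi>(u) = (u - a) (c L - q k) - p (u - a) \<lambda>\<close> is smooth on \<open>u > 0\<close>, vanishes to second order
  at \<open>u = a\<close>, and \<open>\<phi>''(u)\<close> is \<open>(u - a)\<close> times a polynomial \<open>N(u)\<close> over a positive
  denominator. Hence \<open>N \<ge> 0\<close> forces \<open>(b - a) \<phi>(b) \<ge> 0\<close>, which is the inequality.
  For \<open>\<nu> < 1/2\<close> and the coefficients of the theorem, \<open>N\<close> is a quartic form in \<open>a, u\<close> whose
  coefficients are polynomials in \<open>2\<nu>\<close> and \<open>1 - 2\<nu>\<close> with nonnegative coefficients; the case
  \<open>\<nu> > 1/2\<close> follows from the symmetry \<open>(\<nu>, a, b) \<mapsto> (1 - \<nu>, b, a)\<close>.
  \<open>\<alpha> \<ge> 1\<close> is the case \<open>c = q = 0\<close>, and the bound on the identric mean is the identity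
  \<open>identric_w * alpha_nu = RHS\<close>.
\<close>

section \<open>The integrals \<open>r_tilde\<close> and \<open>R_tilde\<close>\<close>

lemma has_integral_antiderivative:
  fixes F f :: "real \<Rightarrow> real"
  assumes "p \<le> q" "\<And>l. l \<in> {p..q} \<Longrightarrow> (F has_real_derivative f l) (at l)"
  shows "(f has_integral (F q - F p)) {p..q}"
  using assms by (intro fundamental_theorem_of_calculus)
    (auto simp: has_real_derivative_iff_has_vector_derivative intro: has_vector_derivative_at_within)

lemma r_tilde_add_R_tilde: "r_tilde \<nu> + R_tilde \<nu> = 1"
proof -
  let ?f = "\<lambda>l. (1 - \<nu>) * r1 \<nu> l + \<nu> * r2 \<nu> l"
  have "(1 - \<nu>) * R1 \<nu> l + \<nu> * R2 \<nu> l = 1 - ?f l" for l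
    unfolding R1_def r1_def R2_def r2_def by (simp add: max_def min_def algebra_simps)
  moreover have "?f integrable_on {0..1}"
    unfolding r1_def r2_def by (intro integrable_continuous_interval continuous_intros)
  ultimately show ?thesis
    unfolding r_tilde_def R_tilde_def by (simp add: integral_diff[OF integrable_const_ivl])
qed

lemma r_tilde_one_minus: "r_tilde (1 - \<nu>) = r_tilde \<nu>"
  unfolding r_tilde_def r1_def r2_def by (simp add: algebra_simps)

lemma r_tilde_lt_half:
  assumes "0 < \<nu>" "\<nu> < 1/2"
  shows "r_tilde \<nu> = \<nu> * (3 - 4*\<nu>) / (4 * (1 - \<nu>))"
proof -
  let ?f = "\<lambda>l. (1 - \<nu>) * r1 \<nu> l + \<nu> * r2 \<nu> l"
  define c where "c = 1 / (2 * (1 - \<nu>))"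
  have c: "0 \<le> c" "c \<le> 1" "2 * \<nu> * (1 - \<nu>) * c = \<nu>" using assms by (auto simp: c_def field_simps)
  have f_eq: "?f l = (if l \<le> c then 2 * \<nu> * (1 - \<nu>) * l else \<nu>)" if "l \<in> {0..1}" for l
  proof -
    have "\<nu> * l \<le> \<nu>" using that assms by (intro mult_left_le) auto
    then have "\<nu> * l \<le> 1/2" using assms by linarith
    then have "r1 \<nu> l = \<nu> * l" unfolding r1_def by simp
    moreover have "r2 \<nu> l = (if l \<le> c then (1 - \<nu>) * l else 1 - (1 - \<nu>) * l)"
      using assms unfolding r2_def c_def by (auto simp: min_def field_simps)
    ultimately show ?thesis by (simp add: algebra_simps)
  qed
  have left: "(?f has_integral (\<nu> * (1 - \<nu>) * c^2 - \<nu> * (1 - \<nu>) * 0^2)) {0..c}"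
    by (rule has_integral_antiderivative[OF c(1)])
       (use f_eq c in \<open>auto intro!: derivative_eq_intros\<close>)
  have right: "(?f has_integral (\<nu> * 1 - \<nu> * c)) {c..1}"
    by (rule has_integral_antiderivative[OF c(2)])
       (use f_eq c in \<open>auto intro!: derivative_eq_intros\<close>)
  have "\<nu> * (1 - \<nu>) * c^2 = (2 * \<nu> * (1 - \<nu>) * c) * c / 2"
    by (simp add: power2_eq_square)
  then have "\<nu> * (1 - \<nu>) * c^2 + (\<nu> - \<nu> * c) = \<nu> - \<nu> * c / 2"
    unfolding c(3) by linarith
  also have "\<dots> = \<nu> * (3 - 4*\<nu>) / (4 * (1 - \<nu>))"
    using assms unfolding c_def by (simp add: field_simps)
  finally show ?thesis
    unfolding r_tilde_def using has_integral_combine[OF c(1,2) left right] by (simp add: integral_unique)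
qed

section \<open>Signs from derivatives\<close>

lemma nonneg_of_derivative_sign:
  fixes h h' :: "real \<Rightarrow> real"
  assumes deriv: "\<And>u. u \<in> {min a b..max a b} \<Longrightarrow> (h has_real_derivative h' u) (at u)"
    and "h a = 0"
    and sign: "\<And>u. u \<in> {min a b..max a b} \<Longrightarrow> (u - a) * h' u \<ge> 0"
  shows "h b \<ge> 0"
proof (cases a b rule: linorder_cases)
  case less
  then obtain z where z: "a < z" "z < b" "h b - h a = (b - a) * h' z"
    using MVT2[OF less, of h h'] deriv by auto
  have "(z - a) * h' z \<ge> 0" using sign z by auto
  then show ?thesis using z \<open>h a = 0\<close> by (simp add: zero_le_mult_iff)
next
  case greater
  then obtain z where z: "b < z" "z < a" "h a - h b = (a - b) * h' z"
    using MVT2[OF greater, of h h'] deriv by auto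
  have "(z - a) * h' z \<ge> 0" using sign z by auto
  then have "h' z \<le> 0" using z by (simp add: zero_le_mult_iff)
  then have "(a - b) * h' z \<le> 0" using z by (simp add: mult_nonneg_nonpos)
  then show ?thesis using z \<open>h a = 0\<close> by linarith
qed (use \<open>h a = 0\<close> in simp)

lemma sign_of_nonneg_derivative:
  fixes g g' :: "real \<Rightarrow> real"
  assumes deriv: "\<And>u. u \<in> {min a b..max a b} \<Longrightarrow> (g has_real_derivative g' u) (at u)"
    and "g a = 0"
    and nonneg: "\<And>u. u \<in> {min a b..max a b} \<Longrightarrow> g' u \<ge> 0"
  shows "(b - a) * g b \<ge> 0"
proof (cases a b rule: linorder_cases)
  case less
  then obtain z where z: "a < z" "z < b" "g b - g a = (b - a) * g' z"
    using MVT2[OF less, of g g'] deriv by auto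
  then show ?thesis using nonneg[of z] \<open>g a = 0\<close> by simp
next
  case greater
  then obtain z where z: "b < z" "z < a" "g a - g b = (a - b) * g' z"
    using MVT2[OF greater, of g g'] deriv by auto
  moreover have "(a - b) * g' z \<ge> 0" using nonneg[of z] z by simp
  ultimately have "g b \<le> 0" using \<open>g a = 0\<close> by linarith
  then show ?thesis using greater by (simp add: mult_nonpos_nonpos)
qed simp

lemma sign_by_second_derivative:
  fixes g g' g'' :: "real \<Rightarrow> real"
  assumes "\<And>u. u \<in> {min a b..max a b} \<Longrightarrow> (g has_real_derivative g' u) (at u)"
    and "\<And>u. u \<in> {min a b..max a b} \<Longrightarrow> (g' has_real_derivative g'' u) (at u)"
    and "g a = 0" "g' a = 0"
    and "\<And>u. u \<in> {min a b..max a b} \<Longrightarrow> (u - a) * g'' u \<ge> 0"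
  shows "(b - a) * g b \<ge> 0"
proof (rule sign_of_nonneg_derivative[OF assms(1,3)])
  fix x assume x: "x \<in> {min a b..max a b}"
  then have sub: "{min a x..max a x} \<subseteq> {min a b..max a b}" by auto
  show "g' x \<ge> 0"
    using nonneg_of_derivative_sign[of a x g' g''] assms(2,4,5) sub by blast
qed

section \<open>The logarithms as functions of the second argument\<close>

lemma wam_pos: "0 < a \<Longrightarrow> 0 < u \<Longrightarrow> 0 < \<nu> \<Longrightarrow> \<nu> < 1 \<Longrightarrow> 0 < wam \<nu> a u"
  unfolding wam_def by (simp add: add_pos_pos)

definition log_am_gm :: "real \<Rightarrow> real \<Rightarrow> real \<Rightarrow> real" where
  "log_am_gm \<nu> a u = ln (wam \<nu> a u) - (1 - \<nu>) * ln a - \<nu> * ln u"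

definition log_kant :: "real \<Rightarrow> real \<Rightarrow> real" where
  "log_kant a u = 2 * ln ((a + u) / 2) - ln a - ln u"

text \<open>\<open>log_alpha_num \<nu> a u\<close> is \<open>(u - a) * ln (alpha_nu \<nu> a u)\<close>; unlike \<open>ln alpha_nu\<close> it is smooth across \<open>u = a\<close>.\<close>

definition log_alpha_num :: "real \<Rightarrow> real \<Rightarrow> real \<Rightarrow> real" where
  "log_alpha_num \<nu> a u =
     a * ln a / \<nu> - u * ln u / (1 - \<nu>)
     + wam \<nu> a u * ln (wam \<nu> a u) / (\<nu> * (1 - \<nu>) * (2*\<nu> - 1))
     - 2 * (a + u) * ln ((a + u) / 2) / (2*\<nu> - 1)"

definition log_alpha_num_deriv :: "real \<Rightarrow> real \<Rightarrow> real \<Rightarrow> real" where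
  "log_alpha_num_deriv \<nu> a u =
     (ln (wam \<nu> a u) + 1) / ((1 - \<nu>) * (2*\<nu> - 1)) - (ln u + 1) / (1 - \<nu>)
     - 2 * (ln ((a + u) / 2) + 1) / (2*\<nu> - 1)"

lemma log_kant_has_derivative:
  assumes a: "0 < a" and u: "0 < u"
  shows "(log_kant a has_real_derivative 2 / (a + u) - 1 / u) (at u)"
  using a u unfolding log_kant_def
  by (auto intro!: derivative_eq_intros simp: field_simps)

lemma log_kant_deriv_has_derivative:
  assumes a: "0 < a" and u: "0 < u"
  shows "((\<lambda>u. 2 / (a + u) - 1 / u) has_real_derivative 1 / u^2 - 2 / (a + u)^2) (at u)"
  using a u by (auto intro!: derivative_eq_intros simp: field_simps power2_eq_square)

context
  fixes \<nu> a u :: real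
  assumes nu: "0 < \<nu>" "\<nu> < 1" and a: "0 < a" and u: "0 < u"
begin

lemma log_am_gm_has_derivative:
  "(log_am_gm \<nu> a has_real_derivative \<nu> / wam \<nu> a u - \<nu> / u) (at u)"
  using wam_pos[OF a u nu] u unfolding log_am_gm_def wam_def
  by (auto intro!: derivative_eq_intros)

lemma log_am_gm_deriv_has_derivative:
  "((\<lambda>u. \<nu> / wam \<nu> a u - \<nu> / u) has_real_derivative \<nu> / u^2 - \<nu>^2 / (wam \<nu> a u)^2) (at u)"
  using wam_pos[OF a u nu] u unfolding wam_def
  by (auto intro!: derivative_eq_intros simp: field_simps power2_eq_square)

lemma log_alpha_num_has_derivative:
  assumes "\<nu> \<noteq> 1/2"
  shows "(log_alpha_num \<nu> a has_real_derivative log_alpha_num_deriv \<nu> a u) (at u)"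
proof -
  have nz: "2*\<nu> - 1 \<noteq> 0" "1 - \<nu> \<noteq> 0" "\<nu> \<noteq> 0" using assms nu by auto
  have cancel: "(4*a + 4*u) / (a*2 + u*2) = 2"
    "(\<nu> * x + \<nu>) / (\<nu> * (1 - \<nu>) * (2*\<nu> - 1)) = (x + 1) / ((1 - \<nu>) * (2*\<nu> - 1))" for x
  proof -
    show "(4*a + 4*u) / (a*2 + u*2) = 2" using a u by (simp add: field_simps)
    show "(\<nu> * x + \<nu>) / (\<nu> * (1 - \<nu>) * (2*\<nu> - 1)) = (x + 1) / ((1 - \<nu>) * (2*\<nu> - 1))"
      using mult_divide_mult_cancel_left[OF nz(3), of "x + 1" "(1 - \<nu>) * (2*\<nu> - 1)"]
      by (simp add: distrib_left mult.assoc)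
  qed
  show ?thesis
    unfolding log_alpha_num_def log_alpha_num_deriv_def
    using wam_pos[OF a u nu] a u nz unfolding wam_def
    by (auto intro!: derivative_eq_intros simp: cancel)
qed

lemma log_alpha_num_deriv_has_derivative:
  assumes "\<nu> \<noteq> 1/2"
  shows "(log_alpha_num_deriv \<nu> a has_real_derivative a * (u - a) / (u * wam \<nu> a u * (a + u))) (at u)"
proof -
  define W S where "W = wam \<nu> a u" and "S = a + u"
  have nz: "2*\<nu> - 1 \<noteq> 0" "1 - \<nu> \<noteq> 0" "W \<noteq> 0" "S \<noteq> 0" "u \<noteq> 0"
    using assms nu wam_pos[OF a u nu] a u unfolding W_def S_def by auto
  have "((\<lambda>u. ln (wam \<nu> a u) + 1) has_real_derivative \<nu> / W) (at u)"
    using wam_pos[OF a u nu] unfolding W_def wam_def by (auto intro!: derivative_eq_intros)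
  moreover have "((\<lambda>u. ln u + 1) has_real_derivative 1 / u) (at u)"
    using u by (auto intro!: derivative_eq_intros)
  moreover have "((\<lambda>u. 2 * (ln ((a + u) / 2) + 1)) has_real_derivative 2 / S) (at u)"
    using a u unfolding S_def by (auto intro!: derivative_eq_intros simp: field_simps)
  ultimately have "(log_alpha_num_deriv \<nu> a has_real_derivative
      \<nu> / W / ((1 - \<nu>) * (2*\<nu> - 1)) - 1 / u / (1 - \<nu>) - 2 / S / (2*\<nu> - 1)) (at u)"
    unfolding log_alpha_num_deriv_def by (intro DERIV_diff DERIV_cdivide)
  moreover have "\<nu> / W / (A * B) - 1 / u / A - 2 / S / B
      = (\<nu> * u * S - B * W * S - 2 * A * u * W) / (A * B * (u * W * S))"
    if "A \<noteq> 0" "B \<noteq> 0" for A B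
    using nz that by (simp add: field_simps)
  moreover have "\<nu> * u * S - (2*\<nu> - 1) * W * S - 2 * (1 - \<nu>) * u * W = (1 - \<nu>) * (2*\<nu> - 1) * (a * (u - a))"
    unfolding W_def S_def wam_def by (simp add: algebra_simps)
  ultimately show ?thesis
    using nz unfolding W_def S_def by simp
qed

end

text \<open>\<open>phi_numerator c p q\<close> is the numerator of the second derivative of
  \<open>u \<mapsto> (u - a) * (c * log_am_gm \<nu> a u - q * log_kant a u) - p * log_alpha_num \<nu> a u\<close>.\<close>

definition phi_numerator :: "real \<Rightarrow> real \<Rightarrow> real \<Rightarrow> real \<Rightarrow> real \<Rightarrow> real \<Rightarrow> real" where
  "phi_numerator c p q \<nu> a u =
     (let W = wam \<nu> a u; S = a + u in
      c * \<nu> * S^2 * (2 * (1 - \<nu>) * u * W + W^2 - \<nu> * u^2) - p * a * u * W * S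
      - q * W^2 * (2 * u * S + S^2 - 2 * u^2))"

lemma phi_second_derivative_eq:
  fixes \<nu> a u :: real
  defines "W \<equiv> wam \<nu> a u" and "S \<equiv> a + u"
  assumes "W \<noteq> 0" "S \<noteq> 0" "u \<noteq> 0"
  shows "2 * (c * (\<nu> / W - \<nu> / u) - q * (2 / S - 1 / u))
      + (u - a) * (c * (\<nu> / u^2 - \<nu>^2 / W^2) - q * (1 / u^2 - 2 / S^2))
      - p * (a * (u - a) / (u * W * S))
    = (u - a) * phi_numerator c p q \<nu> a u / (u * W * S)^2"
proof -
  have am_gm: "2 * (\<nu> / W - \<nu> / u) + (u - a) * (\<nu> / u^2 - \<nu>^2 / W^2)
      = (u - a) * \<nu> * (2 * (1 - \<nu>) * u * W + W^2 - \<nu> * u^2) / (u * W)^2"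
  proof -
    have "u - W = (1 - \<nu>) * (u - a)" unfolding W_def wam_def by (simp add: algebra_simps)
    then show ?thesis using assms(3,5) by (simp add: field_simps power2_eq_square) algebra
  qed
  have kant: "2 * (2 / S - 1 / u) + (u - a) * (1 / u^2 - 2 / S^2)
      = (u - a) * (2 * u * S + S^2 - 2 * u^2) / (u * S)^2"
  proof -
    have S: "S = a + u" unfolding S_def ..
    show ?thesis using assms(4,5)
      by (simp add: field_simps power2_eq_square) (simp add: S algebra_simps)
  qed
  have "2 * (c * (\<nu> / W - \<nu> / u) - q * (2 / S - 1 / u))
      + (u - a) * (c * (\<nu> / u^2 - \<nu>^2 / W^2) - q * (1 / u^2 - 2 / S^2))
      - p * (a * (u - a) / (u * W * S))
    = c * (2 * (\<nu> / W - \<nu> / u) + (u - a) * (\<nu> / u^2 - \<nu>^2 / W^2))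
      - q * (2 * (2 / S - 1 / u) + (u - a) * (1 / u^2 - 2 / S^2))
      - p * (a * (u - a) / (u * W * S))"
    by (simp add: algebra_simps)
  also have "\<dots> = (u - a) * phi_numerator c p q \<nu> a u / (u * W * S)^2"
    unfolding am_gm kant phi_numerator_def Let_def W_def[symmetric] S_def[symmetric]
    using assms(3-5) by (simp add: field_simps power2_eq_square)
  finally show ?thesis .
qed

lemma log_am_gm_self: "log_am_gm \<nu> a a = 0"
  unfolding log_am_gm_def wam_def by (simp add: algebra_simps)

lemma log_kant_self: "log_kant a a = 0"
  unfolding log_kant_def by simp

lemma log_alpha_num_self:
  assumes "\<nu> \<noteq> 0" "\<nu> \<noteq> 1" "\<nu> \<noteq> 1/2"
  shows "log_alpha_num \<nu> a a = 0"
proof -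
  have "1 / \<nu> - 1 / (1 - \<nu>) + 1 / (\<nu> * (1 - \<nu>) * (2*\<nu> - 1)) - 4 / (2*\<nu> - 1) = 0"
    using assms by (simp add: field_simps)
  then have "a * ln a * (1 / \<nu> - 1 / (1 - \<nu>) + 1 / (\<nu> * (1 - \<nu>) * (2*\<nu> - 1)) - 4 / (2*\<nu> - 1)) = 0"
    by simp
  moreover have "wam \<nu> a a = a" unfolding wam_def by (simp add: algebra_simps)
  ultimately show ?thesis
    unfolding log_alpha_num_def by (simp add: algebra_simps)
qed

lemma log_alpha_num_deriv_self:
  assumes "\<nu> \<noteq> 1" "\<nu> \<noteq> 1/2"
  shows "log_alpha_num_deriv \<nu> a a = 0"
proof -
  have "1 / ((1 - \<nu>) * (2*\<nu> - 1)) - 1 / (1 - \<nu>) - 2 / (2*\<nu> - 1) = 0"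
    using assms by (simp add: field_simps)
  then have "(ln a + 1) * (1 / ((1 - \<nu>) * (2*\<nu> - 1)) - 1 / (1 - \<nu>) - 2 / (2*\<nu> - 1)) = 0"
    by simp
  moreover have "wam \<nu> a a = a" unfolding wam_def by (simp add: algebra_simps)
  ultimately show ?thesis
    unfolding log_alpha_num_deriv_def by (simp add: algebra_simps)
qed

lemma log_combination_le:
  fixes c p q \<nu> a b :: real
  assumes a: "0 < a" and b: "0 < b" and nu: "0 < \<nu>" "\<nu> < 1" "\<nu> \<noteq> 1/2"
    and numerator: "\<And>u. 0 < u \<Longrightarrow> 0 \<le> phi_numerator c p q \<nu> a u"
  shows "p * (log_alpha_num \<nu> a b / (b - a)) + q * log_kant a b \<le> c * log_am_gm \<nu> a b"
proof (cases "a = b")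
  case True
  then show ?thesis by (simp add: log_am_gm_self log_kant_self)
next
  case False
  define phi where "phi u = (u - a) * (c * log_am_gm \<nu> a u - q * log_kant a u) - p * log_alpha_num \<nu> a u" for u
  define phi' where "phi' u = c * log_am_gm \<nu> a u - q * log_kant a u
      + (u - a) * (c * (\<nu> / wam \<nu> a u - \<nu> / u) - q * (2 / (a + u) - 1 / u))
      - p * log_alpha_num_deriv \<nu> a u" for u
  define phi'' where "phi'' u = 2 * (c * (\<nu> / wam \<nu> a u - \<nu> / u) - q * (2 / (a + u) - 1 / u))
      + (u - a) * (c * (\<nu> / u^2 - \<nu>^2 / (wam \<nu> a u)^2) - q * (1 / u^2 - 2 / (a + u)^2))
      - p * (a * (u - a) / (u * wam \<nu> a u * (a + u)))" for u
  have pos: "0 < u" if "u \<in> {min a b..max a b}" for u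
    using that a b by (auto simp: min_def split: if_splits)
  have "(b - a) * phi b \<ge> 0"
  proof (rule sign_by_second_derivative)
    fix u assume "u \<in> {min a b..max a b}"
    then have u: "0 < u" by (rule pos)
    have one: "((\<lambda>u. u - a) has_real_derivative 1) (at u)"
      by (auto intro!: derivative_eq_intros)
    show "(phi has_real_derivative phi' u) (at u)"
      unfolding phi_def[abs_def] phi'_def
      by (rule derivative_eq_intros DERIV_mult[OF one] log_am_gm_has_derivative[OF nu(1,2) a u]
          log_kant_has_derivative[OF a u] log_alpha_num_has_derivative[OF nu(1,2) a u nu(3)] | simp)+
    show "(phi' has_real_derivative phi'' u) (at u)"
      unfolding phi'_def[abs_def] phi''_def
      by (rule derivative_eq_intros DERIV_mult[OF one] log_am_gm_has_derivative[OF nu(1,2) a u]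
          log_kant_has_derivative[OF a u] log_am_gm_deriv_has_derivative[OF nu(1,2) a u]
          log_kant_deriv_has_derivative[OF a u] log_alpha_num_deriv_has_derivative[OF nu(1,2) a u nu(3)]
          | simp)+
        (simp add: algebra_simps)
    have "phi'' u = (u - a) * phi_numerator c p q \<nu> a u / (u * wam \<nu> a u * (a + u))^2"
      unfolding phi''_def using phi_second_derivative_eq wam_pos[OF a u nu(1,2)] a u by simp
    then have "(u - a) * phi'' u = (u - a)^2 * phi_numerator c p q \<nu> a u / (u * wam \<nu> a u * (a + u))^2"
      by (simp add: power2_eq_square)
    then show "(u - a) * phi'' u \<ge> 0"
      using numerator[OF u] by simp
  next
    show "phi a = 0" unfolding phi_def using log_alpha_num_self nu by simp
    show "phi' a = 0" unfolding phi'_def using log_alpha_num_deriv_self log_am_gm_self log_kant_self nu by simp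
  qed
  moreover have "(b - a) * phi b = (b - a)^2 * (c * log_am_gm \<nu> a b - q * log_kant a b - p * (log_alpha_num \<nu> a b / (b - a)))"
    unfolding phi_def using False by (simp add: field_simps power2_eq_square)
  ultimately show ?thesis
    using False by (simp add: zero_le_mult_iff)
qed

section \<open>Positivity of the numerators\<close>

lemma phi_numerator_scale:
  "k * phi_numerator c p q \<nu> a u = phi_numerator (k * c) (k * p) (k * q) \<nu> a u"
  unfolding phi_numerator_def Let_def by (simp add: algebra_simps)

text \<open>Both numerators are quartic forms in \<open>a, u\<close>; writing their coefficients in the
  variables \<open>s = 2\<nu>\<close> and \<open>t = 1 - 2\<nu>\<close> (homogenised with \<open>s + t = 1\<close>) makes every coefficient
  visibly nonnegative.\<close>

lemma phi_numerator_lower_nonneg: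
  assumes nu: "0 < \<nu>" "\<nu> < 1/2" and "0 < a" "0 < u"
  shows "0 \<le> phi_numerator 1 \<nu> (\<nu> * (3 - 4*\<nu>) / (4 * (1 - \<nu>))) \<nu> a u"
proof -
  define s t where "s = 2 * \<nu>" and "t = 1 - 2 * \<nu>"
  have st: "0 \<le> s" "0 \<le> t" using nu unfolding s_def t_def by auto
  have "4 * (1 - \<nu>) * phi_numerator 1 \<nu> (\<nu> * (3 - 4*\<nu>) / (4 * (1 - \<nu>))) \<nu> a u
      = phi_numerator (4 * (1 - \<nu>)) (4 * (1 - \<nu>) * \<nu>) (\<nu> * (3 - 4*\<nu>)) \<nu> a u"
    using nu by (simp add: phi_numerator_scale)
  also have "\<dots> = 2 * \<nu> * (
        (t^2/2 + s*t/2 + s^2/8) * a^4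
      + (s*t/2 + s^2/4) * a^3 * u
      + (13/2 * t^3 + 7 * s*t^2 + 9/4 * s^2*t + s^3/4) * a^2 * u^2
      + (4 * t^3 + 15/2 * s*t^2 + 11/4 * s^2*t + s^3/4) * a * u^3
      + (s*t^2 + 5/8 * s^2*t + s^3/8) * u^4)"
    unfolding phi_numerator_def Let_def wam_def s_def t_def by algebra
  also have "\<dots> \<ge> 0"
    using nu st assms(3,4) by (intro mult_nonneg_nonneg add_nonneg_nonneg zero_le_power divide_nonneg_pos) auto
  finally show ?thesis
    using nu by (simp add: zero_le_mult_iff)
qed

lemma phi_numerator_upper_nonneg:
  assumes nu: "0 < \<nu>" "\<nu> < 1/2" and "0 < a" "0 < u"
  shows "0 \<le> phi_numerator (-1) (-(1 - \<nu>)) (-(1 - \<nu> * (3 - 4*\<nu>) / (4 * (1 - \<nu>)))) \<nu> a u"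
proof -
  define s t where "s = 2 * \<nu>" and "t = 1 - 2 * \<nu>"
  have st: "0 \<le> s" "0 \<le> t" using nu unfolding s_def t_def by auto
  have "4 * (1 - \<nu>) * phi_numerator (-1) (-(1 - \<nu>)) (-(1 - \<nu> * (3 - 4*\<nu>) / (4 * (1 - \<nu>)))) \<nu> a u
      = phi_numerator (- (4 * (1 - \<nu>))) (- (4 * (1 - \<nu>) * (1 - \<nu>))) (- (4 - 7*\<nu> + 4*\<nu>^2)) \<nu> a u"
  proof -
    have "4 * (1 - \<nu>) * (\<nu> * (3 - 4*\<nu>) / (4 * (1 - \<nu>))) = \<nu> * (3 - 4*\<nu>)"
      using nu by simp
    then have q: "4 * (1 - \<nu>) * (-(1 - \<nu> * (3 - 4*\<nu>) / (4 * (1 - \<nu>)))) = - (4 - 7*\<nu> + 4*\<nu>^2)"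
      by (simp add: algebra_simps power2_eq_square)
    show ?thesis
      unfolding phi_numerator_scale q by (simp add: algebra_simps)
  qed
  also have "\<dots> = 2 * (
        (2 * t^4 + 13/4 * s*t^3 + 2 * s^2*t^2 + 9/16 * s^3*t + s^4/16) * a^4
      + (10 * t^4 + 20 * s*t^3 + 59/4 * s^2*t^2 + 39/8 * s^3*t + 5/8 * s^4) * a^3 * u
      + (4 * t^4 + 53/4 * s*t^3 + 27/2 * s^2*t^2 + 49/8 * s^3*t + 9/8 * s^4) * a^2 * u^2
      + (s*t^2 + 5/4 * s^2*t + 5/8 * s^3) * a * u^3
      + s^3/16 * u^4)"
    unfolding phi_numerator_def Let_def wam_def s_def t_def by algebra
  also have "\<dots> \<ge> 0"
    using st assms(3,4) by (intro mult_nonneg_nonneg add_nonneg_nonneg zero_le_power divide_nonneg_pos) auto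
  finally show ?thesis
    using nu by (simp add: zero_le_mult_iff)
qed

lemma wam_div_wgm_eq_exp:
  assumes "0 < a" "0 < b" "0 < \<nu>" "\<nu> < 1"
  shows "wam \<nu> a b / wgm \<nu> a b = exp (log_am_gm \<nu> a b)"
proof -
  have "0 < wam \<nu> a b" by (rule wam_pos[OF assms])
  then show ?thesis
    using assms unfolding log_am_gm_def wgm_def
    by (simp add: exp_diff exp_ln powr_def exp_add mult.commute)
qed

lemma kant_eq_exp:
  assumes "0 < a" "0 < b"
  shows "kant a b = exp (log_kant a b)"
proof -
  have "ln (((a + b) / 2)^2) = 2 * ln ((a + b) / 2)"
    using assms by (simp add: ln_realpow)
  then have "exp (2 * ln ((a + b) / 2)) = ((a + b) / 2)^2"
    using assms by (metis exp_ln add_pos_pos half_gt_zero zero_less_power)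
  then have "exp (log_kant a b) = ((a + b) / 2)^2 / (a * b)"
    using assms unfolding log_kant_def by (simp add: exp_diff)
  also have "\<dots> = kant a b"
    unfolding kant_def by (simp add: power_divide)
  finally show ?thesis ..
qed

lemma alpha_nu_eq_exp:
  assumes "0 < a" "0 < b" "0 < \<nu>" "\<nu> < 1"
  shows "alpha_nu \<nu> a b = exp (log_alpha_num \<nu> a b / (b - a))"
proof -
  define X where "X = (a powr (a / \<nu>) / b powr (b / (1 - \<nu>)))
      * ((wam \<nu> a b) powr (wam \<nu> a b / (\<nu> * (1 - \<nu>) * (2*\<nu> - 1)))
         / ((a + b) / 2) powr (2 * (a + b) / (2*\<nu> - 1)))"
  have W: "0 < wam \<nu> a b" by (rule wam_pos[OF assms])
  then have "0 < X" unfolding X_def using assms by simp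
  moreover have "ln X = log_alpha_num \<nu> a b"
    unfolding X_def log_alpha_num_def using assms W by (simp add: ln_div ln_mult ln_powr)
  ultimately show ?thesis
    unfolding alpha_nu_def X_def[symmetric] by (simp add: powr_def)
qed

lemma identric_w_pos:
  assumes "0 < a" "0 < b" "0 < \<nu>" "\<nu> < 1"
  shows "0 < identric_w \<nu> a b"
  using wam_pos[OF assms] assms unfolding identric_w_def by simp

lemma identric_w_mul_alpha_nu:
  assumes "0 < a" "0 < b" "0 < \<nu>" "\<nu> < 1" "\<nu> \<noteq> 1/2"
  shows "identric_w \<nu> a b * alpha_nu \<nu> a b
    = (1 / exp 1) * ((a powr a / b powr b)
        * (((a + b) / 2) powr (2 * (a + b) / (1 - 2*\<nu>))
           / (wam \<nu> a b) powr (4 * wam \<nu> a b / (1 - 2*\<nu>)))) powr (1 / (b - a))"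
    (is "_ = ?R")
proof -
  define W where "W = wam \<nu> a b"
  have W: "0 < W" unfolding W_def by (rule wam_pos) (use assms in auto)
  have nz: "\<nu> \<noteq> 0" "1 - \<nu> \<noteq> 0" "1 - 2*\<nu> \<noteq> 0"
    using assms by auto
  define I where "I = (1 - 2*\<nu>) * W * ln W / (\<nu> * (1 - \<nu>)) + \<nu> * b * ln b / (1 - \<nu>) - (1 - \<nu>) * a * ln a / \<nu>"
  define J where "J = a * ln a - b * ln b + 2 * (a + b) * ln ((a + b) / 2) / (1 - 2*\<nu>) - 4 * W * ln W / (1 - 2*\<nu>)"
  have "ln (identric_w \<nu> a b) = -1 + ((1 - 2*\<nu>) * W / (\<nu> * (1 - \<nu>) * (b - a))) * ln W
      + (1 / (b - a)) * ((\<nu> * b / (1 - \<nu>)) * ln b - ((1 - \<nu>) * a / \<nu>) * ln a)"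
    unfolding identric_w_def W_def[symmetric] using assms W by (simp add: ln_div ln_mult ln_powr)
  also have "\<dots> = -1 + I / (b - a)"
    unfolding I_def by (simp add: diff_divide_distrib add_divide_distrib)
  finally have lnI: "ln (identric_w \<nu> a b) = -1 + I / (b - a)" .
  have "ln ?R = -1 + (1 / (b - a)) * ((a * ln a - b * ln b) + ((2 * (a + b) / (1 - 2*\<nu>)) * ln ((a + b) / 2)
      - (4 * W / (1 - 2*\<nu>)) * ln W))"
    unfolding W_def[symmetric] using assms W by (simp add: ln_div ln_mult ln_powr)
  also have "\<dots> = -1 + J / (b - a)"
    unfolding J_def by simp
  finally have lnR: "ln ?R = -1 + J / (b - a)" .
  have "J - I = a * ln a / \<nu> - b * ln b / (1 - \<nu>) - W * ln W / (\<nu> * (1 - \<nu>) * (1 - 2*\<nu>))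
      + 2 * ((a + b) * ln ((a + b) / 2)) / (1 - 2*\<nu>)"
  proof -
    define m k where "m = 1 - \<nu>" and "k = 1 - 2*\<nu>"
    have mk: "m \<noteq> 0" "k \<noteq> 0" using nz unfolding m_def k_def by auto
    have "J - I - (a * ln a / \<nu> - b * ln b / m - W * ln W / (\<nu> * m * k) + 2 * ((a + b) * ln ((a + b) / 2)) / k)
      = (a * ln a * (\<nu> + m - 1) * m * k - b * ln b * (m + \<nu> - 1) * \<nu> * k
         + W * ln W * (1 - 4*\<nu>*m - k*k)) / (\<nu> * m * k)"
      unfolding I_def J_def m_def[symmetric] k_def[symmetric] using nz(1) mk
      by (simp add: field_simps)
    also have "\<dots> = 0" unfolding m_def k_def by (simp add: algebra_simps)
    finally show ?thesis unfolding m_def k_def by simp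
  qed
  also have "\<dots> = log_alpha_num \<nu> a b"
  proof -
    have flip: "x / (2*\<nu> - 1) = - (x / (1 - 2*\<nu>))" "x / (y * (2*\<nu> - 1)) = - (x / (y * (1 - 2*\<nu>)))"
      for x y :: real
      by (metis divide_minus_right minus_diff_eq mult_minus_right)+
    show ?thesis
      unfolding log_alpha_num_def W_def[symmetric] flip by (simp add: mult.assoc)
  qed
  finally have H: "log_alpha_num \<nu> a b = J - I" ..
  have "0 < ?R"
    unfolding W_def[symmetric] using assms W by simp
  have "identric_w \<nu> a b = exp (-1 + I / (b - a))"
    unfolding lnI[symmetric] using identric_w_pos assms by simp
  then have "identric_w \<nu> a b * alpha_nu \<nu> a b = exp (-1 + I / (b - a) + (J - I) / (b - a))"
    unfolding alpha_nu_eq_exp[OF assms(1-4)] H by (simp add: exp_add)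
  also have "\<dots> = exp (ln ?R)"
    unfolding lnR by (simp add: diff_divide_distrib)
  finally show ?thesis
    using \<open>0 < ?R\<close> by simp
qed

lemma log_am_gm_swap: "log_am_gm (1 - \<nu>) b a = log_am_gm \<nu> a b"
  unfolding log_am_gm_def wam_def by (simp add: algebra_simps)

lemma log_kant_swap: "log_kant b a = log_kant a b"
  unfolding log_kant_def by (simp add: add.commute)

lemma log_alpha_num_swap: "log_alpha_num (1 - \<nu>) b a = - log_alpha_num \<nu> a b"
proof -
  have flip: "x / (2 * (1 - \<nu>) - 1) = - (x / (2*\<nu> - 1))" "x / (y * (2 * (1 - \<nu>) - 1)) = - (x / (y * (2*\<nu> - 1)))"
    for x y :: real
    by (simp_all add: algebra_simps flip: divide_minus_right)
  show ?thesis
    unfolding log_alpha_num_def wam_def flip by (simp add: algebra_simps)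
qed

lemma log_am_gm_bounds_lt_half:
  assumes "0 < a" "0 < b" "0 < \<nu>" "\<nu> < 1/2"
  shows "\<nu> * (log_alpha_num \<nu> a b / (b - a)) + r_tilde \<nu> * log_kant a b \<le> log_am_gm \<nu> a b"
    and "log_am_gm \<nu> a b \<le> (1 - \<nu>) * (log_alpha_num \<nu> a b / (b - a)) + R_tilde \<nu> * log_kant a b"
proof -
  have nu: "0 < \<nu>" "\<nu> < 1" "\<nu> \<noteq> 1/2" using assms by auto
  have r: "r_tilde \<nu> = \<nu> * (3 - 4*\<nu>) / (4 * (1 - \<nu>))"
    using r_tilde_lt_half assms by simp
  then have R: "R_tilde \<nu> = 1 - \<nu> * (3 - 4*\<nu>) / (4 * (1 - \<nu>))"
    using r_tilde_add_R_tilde[of \<nu>] by simp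
  show "\<nu> * (log_alpha_num \<nu> a b / (b - a)) + r_tilde \<nu> * log_kant a b \<le> log_am_gm \<nu> a b"
    unfolding r using log_combination_le[OF assms(1,2) nu phi_numerator_lower_nonneg[OF assms(3,4,1)]]
    by simp
  show "log_am_gm \<nu> a b \<le> (1 - \<nu>) * (log_alpha_num \<nu> a b / (b - a)) + R_tilde \<nu> * log_kant a b"
    unfolding R using log_combination_le[OF assms(1,2) nu phi_numerator_upper_nonneg[OF assms(3,4,1)]]
    unfolding mult_minus_left mult_1 by linarith
qed

lemma log_am_gm_bounds:
  assumes "0 < a" "0 < b" "0 < \<nu>" "\<nu> < 1" "\<nu> \<noteq> 1/2"
  shows "min \<nu> (1 - \<nu>) * (log_alpha_num \<nu> a b / (b - a)) + r_tilde \<nu> * log_kant a b \<le> log_am_gm \<nu> a b"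
      (is ?lower)
    and "log_am_gm \<nu> a b \<le> max \<nu> (1 - \<nu>) * (log_alpha_num \<nu> a b / (b - a)) + R_tilde \<nu> * log_kant a b"
      (is ?upper)
proof -
  have "?lower \<and> ?upper"
  proof (cases "\<nu> < 1/2")
    case True
    then have "min \<nu> (1 - \<nu>) = \<nu>" "max \<nu> (1 - \<nu>) = 1 - \<nu>" by auto
    then show ?thesis
      using log_am_gm_bounds_lt_half[OF assms(1-3) True] by simp
  next
    case False
    then have "0 < 1 - \<nu>" "1 - \<nu> < 1/2" using assms by auto
    note swapped = log_am_gm_bounds_lt_half[OF assms(2,1) this]
    have "min \<nu> (1 - \<nu>) = 1 - \<nu>" "max \<nu> (1 - \<nu>) = \<nu>" using False by auto
    moreover have "log_alpha_num (1 - \<nu>) b a / (a - b) = log_alpha_num \<nu> a b / (b - a)"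
      unfolding log_alpha_num_swap by (simp add: minus_divide_right)
    moreover have "R_tilde (1 - \<nu>) = R_tilde \<nu>"
      using r_tilde_add_R_tilde[of \<nu>] r_tilde_add_R_tilde[of "1 - \<nu>"] r_tilde_one_minus[of \<nu>] by linarith
    ultimately show ?thesis
      \<comment> \<open>instantiated, since \<open>log_kant_swap\<close> is a permutative rewrite rule\<close>
      using swapped unfolding log_am_gm_swap[of \<nu>] log_kant_swap[of b a] r_tilde_one_minus[of \<nu>] by simp
  qed
  then show ?lower ?upper by simp_all
qed

lemma alpha_nu_ge_one:
  assumes "0 < a" "0 < b" "0 < \<nu>" "\<nu> < 1" "\<nu> \<noteq> 1/2"
  shows "1 \<le> alpha_nu \<nu> a b"
proof -
  have "0 \<le> phi_numerator 0 (-1) 0 \<nu> a u" if "0 < u" for u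
    using wam_pos[OF assms(1) that assms(3,4)] assms(1) that unfolding phi_numerator_def Let_def by simp
  then have "0 \<le> log_alpha_num \<nu> a b / (b - a)"
    using log_combination_le[OF assms, of 0 "-1" 0] by simp
  then show ?thesis unfolding alpha_nu_eq_exp[OF assms(1-4)] by simp
qed

theorem mainTheorem14:
  fixes a b \<nu> :: real
  assumes "a > 0" and "b > 0" and "a \<noteq> b"
    and "0 < \<nu>" and "\<nu> < 1" and "\<nu> \<noteq> 1/2"
  shows "alpha_nu \<nu> a b \<ge> 1
    \<and> alpha_nu \<nu> a b powr (min \<nu> (1 - \<nu>)) * kant a b powr (r_tilde \<nu>)
        \<le> wam \<nu> a b / wgm \<nu> a b
    \<and> wam \<nu> a b / wgm \<nu> a b
        \<le> alpha_nu \<nu> a b powr (max \<nu> (1 - \<nu>)) * kant a b powr (R_tilde \<nu>)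
    \<and> identric_w \<nu> a b
        \<le> (1 / exp 1) * ((a powr a / b powr b)
             * (((a + b) / 2) powr (2 * (a + b) / (1 - 2*\<nu>))
                / (wam \<nu> a b) powr (4 * wam \<nu> a b / (1 - 2*\<nu>)))) powr (1 / (b - a))"
proof -
  note a = assms(1,2) and nu = assms(4-6)
  have alpha_ge: "1 \<le> alpha_nu \<nu> a b" by (rule alpha_nu_ge_one[OF a nu])
  have powers: "alpha_nu \<nu> a b powr x * kant a b powr y
      = exp (x * (log_alpha_num \<nu> a b / (b - a)) + y * log_kant a b)" for x y
    unfolding alpha_nu_eq_exp[OF a nu(1,2)] kant_eq_exp[OF a] by (simp add: exp_powr_real exp_add mult.commute)
  have ratio: "wam \<nu> a b / wgm \<nu> a b = exp (log_am_gm \<nu> a b)"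
    by (rule wam_div_wgm_eq_exp[OF a nu(1,2)])
  have identric: "identric_w \<nu> a b \<le> identric_w \<nu> a b * alpha_nu \<nu> a b"
    using identric_w_pos[OF a nu(1,2)] alpha_ge by simp
  show ?thesis
    unfolding powers ratio exp_le_cancel_iff identric_w_mul_alpha_nu[OF a nu, symmetric]
    using alpha_ge log_am_gm_bounds[OF a nu] identric by blast
qed

end
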